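(* Assume $p,q\in[0,1]$. Let $n\ge3$, and let $v\in I_n$ and $w\in I_{n-1}$ be such that $d_{G_n}(v,w)=3$ and $\alpha_1(w)\cap\alpha_2(v)=\emptyset$ (i.e. $w$ is a distant relative of $v$). Let $(v,w',v',w)$ be a path of length three in $G_n$. Then $v'\in I_n$ and $|\sigma(v')|\ge3$.
   Context: Ulam–Harris labels: $\mathcal U_n=\mathbb N^n$ ($n\ge0$, $\mathcal U_0=\{\emptyset\}$), $\mathcal U=\bigcup_{n\ge0}\mathcal U_n$; for $u=u_1\dots u_k$ write $ui=u_1\dots u_ki$. Let $(\xi_u)_{u\in\mathcal U}$ be i.i.d. Poisson with mean $1+p$, and $(\delta_{u,v})_{u,v\in\mathcal U}$, $(\mu_{\{u,v\}})_{u\ne v\in\mathcal U}$ i.i.d. Bernoulli with mean $q$, all independent. The process $\mathcal G(p,q)=(G_n)_{n\ge0}$, $G_n=(V_n,E_n)$: $G_0=(\{\emptyset\},\emptyset)$, and $I_m=V_m\cap\mathcal U_m$. Given $G_{n-1}$ ($n\ge1$): (1) for $u\in I_{n-1}$ let $\mathcal K_u=\{v\in V_{n-1}:d_{G_{n-1}}(u,v)=3\}$ and $\mathcal C_u=\{j\in\mathbb N:j\le\xi_u,\ \delta_{v,uj}=0\ \forall v\in\mathcal K_u\}$; let $\tilde G_n$ have vertex set $V_{n-1}\cup\{ui:u\in I_{n-1},i\in\mathcal C_u\}$ and edge set $E_{n-1}\cup\{\{u,ui\}:u\in I_{n-1},i\in\mathcal C_u\}$, and $\tilde I_n$ its set of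 vertices in $\mathcal U_n$. (2) For $u,v\in\tilde I_n$ write $u\overset{m}{\sim}v$ iff $d_{\tilde G_n}(u,v)=4$ and $\mu_{\{u,v\}}=1$; let $\sim$ be the equivalence relation on $\tilde I_n$ generated by $\overset m\sim$, and $\pi(u)$ the lexicographically smallest element of the class of $u$. Then $V_n=V_{n-1}\cup\{\pi(u):u\in\tilde I_n\}$, $E_n=E_{n-1}\cup\{\{v,\pi(vi)\}:v\in I_{n-1},i\in\mathcal C_v\}$. For $x\in I_n$, $\alpha(x)=\bigcup_{0\le j\le n}\{y\in I_{n-j}:d_{G_n}(y,x)=j\}$ and $\alpha_i(x)=\alpha(x)\cap I_{n-i}$. For $x\in I_n$, $\sigma(x)=\{\tilde x\in\tilde I_n:\tilde x\sim x\}$ (the set of vertices of $\tilde I_n$ merged into $x$). *)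

theory Defs
  imports Main
begin

text \<open>Ulam--Harris labels are lists of positive naturals; the child u i is u @ [i].
  The random variables xi, delta, mu are given by an arbitrary realization:
  xi :: label => nat (Poisson values), delta v u (Bernoulli, True = 1),
  mu {u,v} (Bernoulli indexed by unordered pairs, True = 1).\<close>

type_synonym lbl = "nat list"
type_synonym graph = "lbl set \<times> lbl set set"

definition Ulev :: "nat \<Rightarrow> lbl set" where
  "Ulev n = {u. length u = n \<and> (\<forall>i\<in>set u. 0 < i)}"

definition has_walk :: "graph \<Rightarrow> lbl \<Rightarrow> lbl \<Rightarrow> nat \<Rightarrow> bool" where
  "has_walk G u v k = (\<exists>xs. length xs = Suc k \<and> hd xs = u \<and> last xs = v \<and>
      set xs \<subseteq> fst G \<and> (\<forall>i<k. {xs ! i, xs ! Suc i} \<in> snd G))"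

definition gdist :: "graph \<Rightarrow> lbl \<Rightarrow> lbl \<Rightarrow> nat \<Rightarrow> bool" where
  "gdist G u v k = (has_walk G u v k \<and> (\<forall>m<k. \<not> has_walk G u v m))"

definition Kset :: "graph \<Rightarrow> lbl \<Rightarrow> lbl set" where
  "Kset G u = {v \<in> fst G. gdist G u v 3}"

definition Cset :: "(lbl \<Rightarrow> nat) \<Rightarrow> (lbl \<Rightarrow> lbl \<Rightarrow> bool) \<Rightarrow> graph \<Rightarrow> lbl \<Rightarrow> nat set" where
  "Cset \<xi> \<delta> G u = {j. 1 \<le> j \<and> j \<le> \<xi> u \<and> (\<forall>v\<in>Kset G u. \<not> \<delta> v (u @ [j]))}"

definition Iof :: "nat \<Rightarrow> graph \<Rightarrow> lbl set" where
  "Iof m G = fst G \<inter> Ulev m"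

definition Gtil :: "(lbl \<Rightarrow> nat) \<Rightarrow> (lbl \<Rightarrow> lbl \<Rightarrow> bool) \<Rightarrow> nat \<Rightarrow> graph \<Rightarrow> graph" where
  "Gtil \<xi> \<delta> n G =
    (fst G \<union> {u @ [i] | u i. u \<in> Iof (n - 1) G \<and> i \<in> Cset \<xi> \<delta> G u},
     snd G \<union> {{u, u @ [i]} | u i. u \<in> Iof (n - 1) G \<and> i \<in> Cset \<xi> \<delta> G u})"

definition mrel :: "(lbl \<Rightarrow> nat) \<Rightarrow> (lbl \<Rightarrow> lbl \<Rightarrow> bool) \<Rightarrow> (lbl set \<Rightarrow> bool) \<Rightarrow> nat \<Rightarrow> graph \<Rightarrow> lbl \<Rightarrow> lbl \<Rightarrow> bool" where
  "mrel \<xi> \<delta> \<mu> n G u v = (u \<in> Iof n (Gtil \<xi> \<delta> n G) \<and> v \<in> Iof n (Gtil \<xi> \<delta> n G) \<and>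
      gdist (Gtil \<xi> \<delta> n G) u v 4 \<and> \<mu> {u, v})"

definition simrel :: "(lbl \<Rightarrow> nat) \<Rightarrow> (lbl \<Rightarrow> lbl \<Rightarrow> bool) \<Rightarrow> (lbl set \<Rightarrow> bool) \<Rightarrow> nat \<Rightarrow> graph \<Rightarrow> lbl \<Rightarrow> lbl \<Rightarrow> bool" where
  "simrel \<xi> \<delta> \<mu> n G u v = (u \<in> Iof n (Gtil \<xi> \<delta> n G) \<and> v \<in> Iof n (Gtil \<xi> \<delta> n G) \<and>
      (u, v) \<in> {(x, y). mrel \<xi> \<delta> \<mu> n G x y \<or> mrel \<xi> \<delta> \<mu> n G y x}\<^sup>*)"

definition lexle :: "lbl \<Rightarrow> lbl \<Rightarrow> bool" where
  "lexle x y = (x = y \<or> (x, y) \<in> lexord {(a, b). a < b})"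

definition piof :: "(lbl \<Rightarrow> nat) \<Rightarrow> (lbl \<Rightarrow> lbl \<Rightarrow> bool) \<Rightarrow> (lbl set \<Rightarrow> bool) \<Rightarrow> nat \<Rightarrow> graph \<Rightarrow> lbl \<Rightarrow> lbl" where
  "piof \<xi> \<delta> \<mu> n G u = (THE x. simrel \<xi> \<delta> \<mu> n G u x \<and> (\<forall>y. simrel \<xi> \<delta> \<mu> n G u y \<longrightarrow> lexle x y))"

definition step :: "(lbl \<Rightarrow> nat) \<Rightarrow> (lbl \<Rightarrow> lbl \<Rightarrow> bool) \<Rightarrow> (lbl set \<Rightarrow> bool) \<Rightarrow> nat \<Rightarrow> graph \<Rightarrow> graph" where
  "step \<xi> \<delta> \<mu> n G =
    (fst G \<union> piof \<xi> \<delta> \<mu> n G ` Iof n (Gtil \<xi> \<delta> n G),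
     snd G \<union> {{v, piof \<xi> \<delta> \<mu> n G (v @ [i])} | v i. v \<in> Iof (n - 1) G \<and> i \<in> Cset \<xi> \<delta> G v})"

primrec Gproc :: "(lbl \<Rightarrow> nat) \<Rightarrow> (lbl \<Rightarrow> lbl \<Rightarrow> bool) \<Rightarrow> (lbl set \<Rightarrow> bool) \<Rightarrow> nat \<Rightarrow> graph" where
  "Gproc \<xi> \<delta> \<mu> 0 = ({[]}, {})"
| "Gproc \<xi> \<delta> \<mu> (Suc n) = step \<xi> \<delta> \<mu> (Suc n) (Gproc \<xi> \<delta> \<mu> n)"

definition Ilev :: "(lbl \<Rightarrow> nat) \<Rightarrow> (lbl \<Rightarrow> lbl \<Rightarrow> bool) \<Rightarrow> (lbl set \<Rightarrow> bool) \<Rightarrow> nat \<Rightarrow> lbl set" where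
  "Ilev \<xi> \<delta> \<mu> m = Iof m (Gproc \<xi> \<delta> \<mu> m)"

definition alpha :: "(lbl \<Rightarrow> nat) \<Rightarrow> (lbl \<Rightarrow> lbl \<Rightarrow> bool) \<Rightarrow> (lbl set \<Rightarrow> bool) \<Rightarrow> nat \<Rightarrow> nat \<Rightarrow> lbl \<Rightarrow> lbl set" where
  "alpha \<xi> \<delta> \<mu> m i x = {y \<in> Ilev \<xi> \<delta> \<mu> (m - i). gdist (Gproc \<xi> \<delta> \<mu> m) y x i}"

definition sigma :: "(lbl \<Rightarrow> nat) \<Rightarrow> (lbl \<Rightarrow> lbl \<Rightarrow> bool) \<Rightarrow> (lbl set \<Rightarrow> bool) \<Rightarrow> nat \<Rightarrow> lbl \<Rightarrow> lbl set" where
  "sigma \<xi> \<delta> \<mu> n x = {y. simrel \<xi> \<delta> \<mu> n (Gproc \<xi> \<delta> \<mu> (n - 1)) y x}"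

end

theory Submission
  imports Defs "HOL-Library.List_Lexorder"
begin

(*
  Since w is a distant relative of v, the vertices w and w' of level n - 1 (w' being a neighbour
  of v) have no common neighbour of level n - 2: it would lie in alpha_1(w) and, through the path
  x w' v, in alpha_2(v).  Hence v' is of level n, and the edges {w', v'} and {v', w} were created
  by merging: v' = pi(w' i) = pi(w j).  These two children are distinct and not directly merged,
  because a path of length 4 between them in tilde G_n runs through a common neighbour of w' and w
  of level n - 2.  So the chain of direct merges joining them passes through a third element of
  sigma(v').
*)

lemma lexle_iff_le: "lexle x y \<longleftrightarrow> x \<le> y"
  by (auto simp: lexle_def list_le_def list_less_def)

lemma has_walk_0_iff: "has_walk G u v 0 \<longleftrightarrow> u = v \<and> u \<in> fst G"
  by (auto simp: has_walk_def length_Suc_conv intro!: exI[of _ "[u]"])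

lemma has_walk_Suc_iff:
  "has_walk G u v (Suc k) \<longleftrightarrow> u \<in> fst G \<and> (\<exists>x. {u, x} \<in> snd G \<and> has_walk G x v k)"
proof
  assume "has_walk G u v (Suc k)"
  then obtain x ys where xs: "length ys = k" "last (u # x # ys) = v" "set (u # x # ys) \<subseteq> fst G"
      "\<forall>i<Suc k. {(u # x # ys) ! i, (u # x # ys) ! Suc i} \<in> snd G"
    unfolding has_walk_def by (auto simp: length_Suc_conv)
  have "{u, x} \<in> snd G" using xs(4) by force
  moreover have "has_walk G x v k"
    unfolding has_walk_def using xs by (intro exI[of _ "x # ys"]) auto
  ultimately show "u \<in> fst G \<and> (\<exists>x. {u, x} \<in> snd G \<and> has_walk G x v k)" using xs(3) by auto
next
  assume "u \<in> fst G \<and> (\<exists>x. {u, x} \<in> snd G \<and> has_walk G x v k)"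
  then obtain x xs where "u \<in> fst G" "{u, x} \<in> snd G" "length xs = Suc k" "hd xs = x" "last xs = v"
      "set xs \<subseteq> fst G" "\<forall>i<k. {xs ! i, xs ! Suc i} \<in> snd G"
    unfolding has_walk_def by blast
  then show "has_walk G u v (Suc k)"
    unfolding has_walk_def by (intro exI[of _ "u # xs"]) (auto simp: less_Suc_eq_0_disj hd_conv_nth)
qed

lemma gdist_oneI:
  assumes "{x, y} \<in> snd G" "x \<in> fst G" "y \<in> fst G" "x \<noteq> y"
  shows "gdist G x y 1"
  using assms by (auto simp: gdist_def has_walk_Suc_iff has_walk_0_iff)

lemma gdist_twoI:
  assumes "{x, z} \<in> snd G" "{z, y} \<in> snd G" "x \<in> fst G" "z \<in> fst G" "y \<in> fst G"
    and "x \<noteq> y" "{x, y} \<notin> snd G"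
  shows "gdist G x y 2"
  using assms by (auto simp: gdist_def numeral_2_eq_2 less_Suc_eq has_walk_Suc_iff has_walk_0_iff)

lemma has_walk_4_iff:
  "has_walk G a b 4 \<longleftrightarrow> a \<in> fst G \<and> (\<exists>x1 x2 x3.
     {a, x1} \<in> snd G \<and> {x1, x2} \<in> snd G \<and> {x2, x3} \<in> snd G \<and> {x3, b} \<in> snd G \<and>
     x1 \<in> fst G \<and> x2 \<in> fst G \<and> x3 \<in> fst G \<and> b \<in> fst G)"
  by (auto simp: numeral_eq_Suc has_walk_Suc_iff has_walk_0_iff)

definition levelled_graph :: "nat \<Rightarrow> graph \<Rightarrow> bool" where
  "levelled_graph k G \<longleftrightarrow> finite (fst G) \<and> (\<forall>x\<in>fst G. length x \<le> k \<and> x \<in> Ulev (length x)) \<and>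
     (\<forall>e\<in>snd G. \<exists>a b. e = {a, b} \<and> a \<in> fst G \<and> b \<in> fst G \<and> length b = Suc (length a))"

lemma levelled_graph_vertex:
  "levelled_graph k G \<Longrightarrow> x \<in> fst G \<Longrightarrow> length x \<le> k \<and> x \<in> Ulev (length x)"
  by (simp add: levelled_graph_def)

lemma levelled_graph_edge:
  assumes "levelled_graph k G" "{x, y} \<in> snd G"
  shows "x \<in> fst G \<and> y \<in> fst G \<and> (length x = Suc (length y) \<or> length y = Suc (length x))"
proof -
  obtain a b where "{x, y} = {a, b}" "a \<in> fst G" "b \<in> fst G" "length b = Suc (length a)"
    using assms unfolding levelled_graph_def by blast
  then show ?thesis by (auto simp: doubleton_eq_iff)
qed

context fixes \<xi> :: "lbl \<Rightarrow> nat" and \<delta> :: "lbl \<Rightarrow> lbl \<Rightarrow> bool" and \<mu> :: "lbl set \<Rightarrow> bool"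
begin

lemma finite_fst_Gtil:
  assumes "finite (fst G)" shows "finite (fst (Gtil \<xi> \<delta> n G))"
proof -
  have "{u @ [i] | u i. u \<in> Iof (n - 1) G \<and> i \<in> Cset \<xi> \<delta> G u}
      \<subseteq> (\<Union>u\<in>fst G. (\<lambda>i. u @ [i]) ` {1..\<xi> u})"
    by (auto simp: Iof_def Cset_def)
  moreover have "finite (\<Union>u\<in>fst G. (\<lambda>i. u @ [i]) ` {1..\<xi> u})" using assms by simp
  ultimately have "finite {u @ [i] | u i. u \<in> Iof (n - 1) G \<and> i \<in> Cset \<xi> \<delta> G u}"
    by (rule finite_subset)
  then show ?thesis using assms by (simp add: Gtil_def)
qed

lemma child_mem_Iof_Gtil:
  "u \<in> Iof m G \<Longrightarrow> i \<in> Cset \<xi> \<delta> G u \<Longrightarrow> u @ [i] \<in> Iof (Suc m) (Gtil \<xi> \<delta> (Suc m) G)"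
  by (auto simp: Iof_def Gtil_def Ulev_def Cset_def)

lemma simrel_imp_mem_Iof:
  "simrel \<xi> \<delta> \<mu> n G u y \<Longrightarrow> u \<in> Iof n (Gtil \<xi> \<delta> n G) \<and> y \<in> Iof n (Gtil \<xi> \<delta> n G)"
  by (simp add: simrel_def)

lemma simrel_sym: "simrel \<xi> \<delta> \<mu> n G u y \<Longrightarrow> simrel \<xi> \<delta> \<mu> n G y u"
proof -
  have "sym {(x, y). mrel \<xi> \<delta> \<mu> n G x y \<or> mrel \<xi> \<delta> \<mu> n G y x}" by (auto simp: sym_def)
  then show "simrel \<xi> \<delta> \<mu> n G u y \<Longrightarrow> simrel \<xi> \<delta> \<mu> n G y u"
    unfolding simrel_def by (meson sym_rtrancl symD)
qed

lemma simrel_trans: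
  "simrel \<xi> \<delta> \<mu> n G u y \<Longrightarrow> simrel \<xi> \<delta> \<mu> n G y z \<Longrightarrow> simrel \<xi> \<delta> \<mu> n G u z"
  unfolding simrel_def by (meson rtrancl_trans)

lemma finite_simrel_class:
  assumes "finite (fst G)" shows "finite {y. simrel \<xi> \<delta> \<mu> n G y z}"
  by (rule finite_subset[OF _ finite_fst_Gtil[OF assms]]) (auto simp: simrel_def Iof_def)

text \<open>Only for a finite class does the THE in piof denote its lexicographic minimum.\<close>
lemma simrel_piof:
  assumes "finite (fst G)" and "u \<in> Iof n (Gtil \<xi> \<delta> n G)"
  shows "simrel \<xi> \<delta> \<mu> n G u (piof \<xi> \<delta> \<mu> n G u)"
proof -
  define C where "C = {y. simrel \<xi> \<delta> \<mu> n G u y}"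
  have "finite C"
    using finite_fst_Gtil[OF assms(1)] by (rule rev_finite_subset) (auto simp: C_def simrel_def Iof_def)
  moreover have "u \<in> C" using assms(2) by (simp add: C_def simrel_def)
  ultimately have Min: "Min C \<in> C" "\<forall>y\<in>C. Min C \<le> y" by (auto intro: Min_in)
  have "piof \<xi> \<delta> \<mu> n G u = Min C"
    unfolding piof_def lexle_iff_le
    by (rule the_equality) (use Min in \<open>auto simp: C_def intro: order_antisym\<close>)
  then show ?thesis using Min(1) by (simp add: C_def)
qed

lemma piof_mem_Iof:
  "finite (fst G) \<Longrightarrow> u \<in> Iof n (Gtil \<xi> \<delta> n G) \<Longrightarrow> piof \<xi> \<delta> \<mu> n G u \<in> Iof n (Gtil \<xi> \<delta> n G)"
  using simrel_piof simrel_imp_mem_Iof by blast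

lemma not_mrel_refl: "\<not> mrel \<xi> \<delta> \<mu> n G x x"
proof
  assume "mrel \<xi> \<delta> \<mu> n G x x"
  then have "has_walk (Gtil \<xi> \<delta> n G) x x 0" "gdist (Gtil \<xi> \<delta> n G) x x 4"
    by (auto simp: mrel_def Iof_def has_walk_0_iff)
  then show False by (auto simp: gdist_def)
qed

lemma three_le_card_simrel_class:
  assumes "finite (fst G)" and "simrel \<xi> \<delta> \<mu> n G a z" "simrel \<xi> \<delta> \<mu> n G b z" "a \<noteq> b"
    and "\<not> mrel \<xi> \<delta> \<mu> n G a b" "\<not> mrel \<xi> \<delta> \<mu> n G b a"
  shows "3 \<le> card {y. simrel \<xi> \<delta> \<mu> n G y z}"
proof -
  let ?R = "{(x, y). mrel \<xi> \<delta> \<mu> n G x y \<or> mrel \<xi> \<delta> \<mu> n G y x}"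
  have ab: "simrel \<xi> \<delta> \<mu> n G a b" using assms(2,3) simrel_sym simrel_trans by blast
  then obtain c where c: "(a, c) \<in> ?R" "(c, b) \<in> ?R\<^sup>*"
    using \<open>a \<noteq> b\<close> unfolding simrel_def by (meson converse_rtranclE)
  then have "simrel \<xi> \<delta> \<mu> n G c b" using ab by (auto simp: simrel_def mrel_def)
  then have "{a, b, c} \<subseteq> {y. simrel \<xi> \<delta> \<mu> n G y z}" using assms(2,3) simrel_trans by blast
  moreover have "c \<noteq> a" "c \<noteq> b" using c(1) assms(5,6) not_mrel_refl[of n G] by auto
  then have "card {a, b, c} = 3" using \<open>a \<noteq> b\<close> by simp
  ultimately show ?thesis
    using card_mono[OF finite_simrel_class[OF assms(1)]] by metis
qed

lemma new_vertex_of_step: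
  assumes "finite (fst G)" "x \<in> fst (step \<xi> \<delta> \<mu> n G)" "x \<notin> fst G"
  shows "x \<in> Iof n (Gtil \<xi> \<delta> n G)"
  using assms piof_mem_Iof[OF assms(1)] by (auto simp: step_def)

lemma new_edge_of_step:
  assumes "e \<in> snd (step \<xi> \<delta> \<mu> (Suc m) G)" "e \<notin> snd G"
  obtains u i where "e = {u, piof \<xi> \<delta> \<mu> (Suc m) G (u @ [i])}" "u \<in> Iof m G"
    "u @ [i] \<in> Iof (Suc m) (Gtil \<xi> \<delta> (Suc m) G)"
  using assms child_mem_Iof_Gtil[of _ m G] by (auto simp: step_def)

lemma levelled_graph_step:
  assumes "levelled_graph m G"
  shows "levelled_graph (Suc m) (step \<xi> \<delta> \<mu> (Suc m) G)"
proof -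
  let ?S = "step \<xi> \<delta> \<mu> (Suc m) G" and ?T = "Gtil \<xi> \<delta> (Suc m) G"
  have fin: "finite (fst G)" using assms by (simp add: levelled_graph_def)
  then have "finite (Iof (Suc m) ?T)" using finite_fst_Gtil by (simp add: Iof_def)
  then have "finite (fst ?S)" using fin by (simp add: step_def)
  moreover have "length x \<le> Suc m \<and> x \<in> Ulev (length x)" if "x \<in> fst ?S" for x
  proof (cases "x \<in> fst G")
    case True then show ?thesis using levelled_graph_vertex[OF assms True] by simp
  next
    case False then show ?thesis
      using new_vertex_of_step[OF fin that] by (simp add: Iof_def Ulev_def)
  qed
  moreover have "\<exists>a b. e = {a, b} \<and> a \<in> fst ?S \<and> b \<in> fst ?S \<and> length b = Suc (length a)"
    if edge: "e \<in> snd ?S" for e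
  proof (cases "e \<in> snd G")
    case True
    then obtain a b where "e = {a, b}" "a \<in> fst G" "b \<in> fst G" "length b = Suc (length a)"
      using assms unfolding levelled_graph_def by blast
    moreover have "fst G \<subseteq> fst ?S" by (simp add: step_def)
    ultimately show ?thesis by blast
  next
    case False
    then obtain u i where e: "e = {u, piof \<xi> \<delta> \<mu> (Suc m) G (u @ [i])}" "u \<in> Iof m G"
        "u @ [i] \<in> Iof (Suc m) ?T"
      using new_edge_of_step[OF edge False] by blast
    then have "piof \<xi> \<delta> \<mu> (Suc m) G (u @ [i]) \<in> Iof (Suc m) ?T" using piof_mem_Iof fin by blast
    then show ?thesis using e
      by (intro exI[of _ u] exI[of _ "piof \<xi> \<delta> \<mu> (Suc m) G (u @ [i])"])
        (auto simp: step_def Iof_def Ulev_def)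
  qed
  ultimately show ?thesis by (simp add: levelled_graph_def)
qed

lemma levelled_graph_Gproc: "levelled_graph m (Gproc \<xi> \<delta> \<mu> m)"
proof (induction m)
  case 0
  show ?case by (simp add: levelled_graph_def Ulev_def)
qed (simp add: levelled_graph_step)

lemma finite_fst_Gproc: "finite (fst (Gproc \<xi> \<delta> \<mu> m))"
  using levelled_graph_Gproc by (simp add: levelled_graph_def)

lemma snd_Gproc_mono: "m \<le> k \<Longrightarrow> snd (Gproc \<xi> \<delta> \<mu> m) \<subseteq> snd (Gproc \<xi> \<delta> \<mu> k)"
  by (rule lift_Suc_mono_le[of "\<lambda>k. snd (Gproc \<xi> \<delta> \<mu> k)"]) (auto simp: step_def)

lemma mem_fst_Gproc_length:
  "x \<in> fst (Gproc \<xi> \<delta> \<mu> m) \<Longrightarrow> x \<in> fst (Gproc \<xi> \<delta> \<mu> (length x))"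
proof (induction m)
  case (Suc m)
  show ?case
  proof (cases "x \<in> fst (Gproc \<xi> \<delta> \<mu> m)")
    case False
    then have "x \<in> Iof (Suc m) (Gtil \<xi> \<delta> (Suc m) (Gproc \<xi> \<delta> \<mu> m))"
      using new_vertex_of_step finite_fst_Gproc Suc.prems by simp
    then show ?thesis using Suc.prems by (simp add: Iof_def Ulev_def)
  qed (use Suc.IH in blast)
qed simp

lemma mem_snd_Gproc_length:
  "{a, b} \<in> snd (Gproc \<xi> \<delta> \<mu> m) \<Longrightarrow> length b = Suc (length a) \<Longrightarrow>
    {a, b} \<in> snd (Gproc \<xi> \<delta> \<mu> (length b))"
proof (induction m)
  case (Suc m)
  let ?G = "Gproc \<xi> \<delta> \<mu> m"
  show ?case
  proof (cases "{a, b} \<in> snd ?G")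
    case False
    then obtain u i where e: "{a, b} = {u, piof \<xi> \<delta> \<mu> (Suc m) ?G (u @ [i])}" "u \<in> Iof m ?G"
        "u @ [i] \<in> Iof (Suc m) (Gtil \<xi> \<delta> (Suc m) ?G)"
      using new_edge_of_step Suc.prems(1) by (metis Gproc.simps(2))
    then have "length (piof \<xi> \<delta> \<mu> (Suc m) ?G (u @ [i])) = Suc m" "length u = m"
      using piof_mem_Iof[OF finite_fst_Gproc e(3)] e(2) by (auto simp: Iof_def Ulev_def)
    then have "length b = Suc m" using e(1) Suc.prems(2) by (auto simp: doubleton_eq_iff)
    then show ?thesis using Suc.prems(1) by simp
  qed (use Suc in blast)
qed simp

end

declare Gproc.simps(2) [simp del]

context fixes \<xi> :: "lbl \<Rightarrow> nat" and \<delta> :: "lbl \<Rightarrow> lbl \<Rightarrow> bool" and \<mu> :: "lbl set \<Rightarrow> bool"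
begin

lemma Gtil_vertex_length:
  assumes "levelled_graph m G" "x \<in> fst (Gtil \<xi> \<delta> (Suc m) G)"
  shows "length x \<le> Suc m"
proof (cases "x \<in> fst G")
  case True then show ?thesis using levelled_graph_vertex[OF assms(1) True] by simp
next
  case False then show ?thesis using assms(2) by (auto simp: Gtil_def Iof_def Ulev_def)
qed

lemma Gtil_edge_cases:
  assumes "{x, y} \<in> snd (Gtil \<xi> \<delta> (Suc m) G)"
  shows "{x, y} \<in> snd G \<or> (\<exists>i. x = y @ [i] \<and> length y = m) \<or> (\<exists>i. y = x @ [i] \<and> length x = m)"
  using assms by (auto simp: Gtil_def Iof_def Ulev_def doubleton_eq_iff)

lemma Gtil_edge_from_top:
  assumes "levelled_graph m G" "{x, y} \<in> snd (Gtil \<xi> \<delta> (Suc m) G)" "length x = Suc m"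
  shows "\<exists>i. x = y @ [i]"
proof -
  have "x \<notin> fst G" using levelled_graph_vertex[OF assms(1), of x] assms(3) by auto
  then have "{x, y} \<notin> snd G" using levelled_graph_edge[OF assms(1), of x y] by blast
  then show ?thesis using Gtil_edge_cases[OF assms(2)] assms(3) by auto
qed

lemma Gtil_edge_below_top:
  assumes "{x, y} \<in> snd (Gtil \<xi> \<delta> (Suc m) G)" "length x \<le> m" "length y \<le> m"
  shows "{x, y} \<in> snd G"
  using Gtil_edge_cases[OF assms(1)] assms(2,3) by auto

lemma mrel_children_common_parent:
  assumes G: "levelled_graph m G" and "mrel \<xi> \<delta> \<mu> (Suc m) G (a @ [i]) (b @ [j])"
    and "length a = m" "length b = m" "a \<noteq> b"
  shows "\<exists>x. {a, x} \<in> snd G \<and> {x, b} \<in> snd G \<and> Suc (length x) = m"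
proof -
  let ?T = "Gtil \<xi> \<delta> (Suc m) G"
  have "has_walk ?T (a @ [i]) (b @ [j]) 4" using assms(2) by (simp add: mrel_def gdist_def)
  then obtain x1 x x3 where walk: "{a @ [i], x1} \<in> snd ?T" "{x1, x} \<in> snd ?T" "{x, x3} \<in> snd ?T"
      "{x3, b @ [j]} \<in> snd ?T" "x \<in> fst ?T"
    by (auto simp: has_walk_4_iff)
  have "x1 = a" using Gtil_edge_from_top[OF G walk(1)] assms(3) by auto
  moreover have "x3 = b" using Gtil_edge_from_top[OF G, of "b @ [j]" x3] walk(4) assms(4)
    by (auto simp: insert_commute)
  ultimately have ax: "{x, a} \<in> snd ?T" and xb: "{x, b} \<in> snd ?T" using walk by (auto simp: insert_commute)
  have "length x \<noteq> Suc m"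
  proof
    assume "length x = Suc m"
    then have "\<exists>k. x = a @ [k]" "\<exists>k. x = b @ [k]"
      using Gtil_edge_from_top[OF G ax] Gtil_edge_from_top[OF G xb] by auto
    then show False using \<open>a \<noteq> b\<close> by auto
  qed
  then have "length x \<le> m" using Gtil_vertex_length[OF G walk(5)] by simp
  then have "{a, x} \<in> snd G" "{x, b} \<in> snd G"
    using Gtil_edge_below_top ax xb assms(3,4) by (auto simp: insert_commute)
  moreover have "Suc (length x) = m"
    using levelled_graph_edge[OF G \<open>{a, x} \<in> snd G\<close>] \<open>length x \<le> m\<close> assms(3) by auto
  ultimately show ?thesis by blast
qed

lemma not_mrel_children_without_common_parent:
  assumes "length a = m" "length b = m" "a \<noteq> b"
    and "\<And>x. {x, a} \<in> snd (Gproc \<xi> \<delta> \<mu> (Suc m)) \<Longrightarrow> {x, b} \<in> snd (Gproc \<xi> \<delta> \<mu> (Suc m)) \<Longrightarrow>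
      Suc (length x) \<noteq> m"
  shows "\<not> mrel \<xi> \<delta> \<mu> (Suc m) (Gproc \<xi> \<delta> \<mu> m) (a @ [i]) (b @ [j])"
proof
  assume "mrel \<xi> \<delta> \<mu> (Suc m) (Gproc \<xi> \<delta> \<mu> m) (a @ [i]) (b @ [j])"
  then obtain x where "{a, x} \<in> snd (Gproc \<xi> \<delta> \<mu> m)" "{x, b} \<in> snd (Gproc \<xi> \<delta> \<mu> m)"
      "Suc (length x) = m"
    using mrel_children_common_parent[OF levelled_graph_Gproc] assms(1-3) by blast
  moreover have "snd (Gproc \<xi> \<delta> \<mu> m) \<subseteq> snd (Gproc \<xi> \<delta> \<mu> (Suc m))" by (rule snd_Gproc_mono) simp
  ultimately show False using assms(4)[of x] by (metis insert_commute subsetD)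
qed

lemma simrel_child_of_top_level_edge:
  assumes "{u, y} \<in> snd (Gproc \<xi> \<delta> \<mu> (Suc m))" "length u = m" "length y = Suc m"
  obtains i where "simrel \<xi> \<delta> \<mu> (Suc m) (Gproc \<xi> \<delta> \<mu> m) (u @ [i]) y"
proof -
  let ?G = "Gproc \<xi> \<delta> \<mu> m"
  have "y \<notin> fst ?G" using levelled_graph_vertex[OF levelled_graph_Gproc] assms(3) by fastforce
  then have "{u, y} \<notin> snd ?G" using levelled_graph_edge[OF levelled_graph_Gproc] by blast
  then obtain u' i where e: "{u, y} = {u', piof \<xi> \<delta> \<mu> (Suc m) ?G (u' @ [i])}" "u' \<in> Iof m ?G"
      "u' @ [i] \<in> Iof (Suc m) (Gtil \<xi> \<delta> (Suc m) ?G)"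
    using new_edge_of_step assms(1) by (metis Gproc.simps(2))
  have "length u' = m" using e(2) by (simp add: Iof_def Ulev_def)
  then have "u' = u" "y = piof \<xi> \<delta> \<mu> (Suc m) ?G (u' @ [i])"
    using e(1) assms(2,3) by (auto simp: doubleton_eq_iff)
  then show ?thesis using that[of i] simrel_piof[where \<mu> = \<mu>, OF finite_fst_Gproc e(3)] by simp
qed

lemma neighbour_length_of_top_level:
  assumes "{v, u} \<in> snd (Gproc \<xi> \<delta> \<mu> (Suc m))" "length v = Suc m"
  shows "length u = m"
  using levelled_graph_edge[OF levelled_graph_Gproc assms(1)]
    levelled_graph_vertex[OF levelled_graph_Gproc[of "Suc m"], of u] assms(2) by auto

lemma neighbour_mem_Ilev_Suc:
  assumes "{u, y} \<in> snd (Gproc \<xi> \<delta> \<mu> (Suc m))" "length u = m" "Suc (length y) \<noteq> m"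
  shows "y \<in> Ilev \<xi> \<delta> \<mu> (Suc m)"
proof -
  have "y \<in> fst (Gproc \<xi> \<delta> \<mu> (Suc m))" "length y = Suc m"
    using levelled_graph_edge[OF levelled_graph_Gproc assms(1)] assms(2,3) by auto
  then show ?thesis
    using levelled_graph_vertex[OF levelled_graph_Gproc] by (fastforce simp: Ilev_def Iof_def)
qed

lemma distant_relative_no_common_parent:
  assumes v: "v \<in> Ilev \<xi> \<delta> \<mu> (Suc m)" and w: "length w = m"
    and vw': "{v, w'} \<in> snd (Gproc \<xi> \<delta> \<mu> (Suc m))"
    and distant: "alpha \<xi> \<delta> \<mu> m 1 w \<inter> alpha \<xi> \<delta> \<mu> (Suc m) 2 v = {}"
    and xw: "{x, w} \<in> snd (Gproc \<xi> \<delta> \<mu> (Suc m))" and xw': "{x, w'} \<in> snd (Gproc \<xi> \<delta> \<mu> (Suc m))"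
  shows "Suc (length x) \<noteq> m"
proof
  assume x: "Suc (length x) = m"
  let ?Gn = "Gproc \<xi> \<delta> \<mu> (Suc m)" and ?G = "Gproc \<xi> \<delta> \<mu> m"
  have Gn: "levelled_graph (Suc m) ?Gn" and G: "levelled_graph m ?G" by (rule levelled_graph_Gproc)+
  have lv: "length v = Suc m" using v by (simp add: Ilev_def Iof_def Ulev_def)
  have x_Gn: "x \<in> fst ?Gn" "w' \<in> fst ?Gn" "v \<in> fst ?Gn"
    using levelled_graph_edge[OF Gn xw'] levelled_graph_edge[OF Gn vw'] by simp_all
  have "x \<in> fst (Gproc \<xi> \<delta> \<mu> (length x))" "x \<in> Ulev (length x)"
    using mem_fst_Gproc_length[OF x_Gn(1)] levelled_graph_vertex[OF Gn x_Gn(1)] by simp_all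
  then have x_lev: "x \<in> Ilev \<xi> \<delta> \<mu> (m - 1)" using x by (auto simp: Ilev_def Iof_def)
  have "{x, w} \<in> snd ?G" using mem_snd_Gproc_length[OF xw] x w by simp
  moreover have "x \<noteq> w" using x w by auto
  ultimately have "gdist ?G x w 1" using gdist_oneI levelled_graph_edge[OF G] by blast
  then have "x \<in> alpha \<xi> \<delta> \<mu> m 1 w" using x_lev by (simp add: alpha_def)
  moreover have "gdist ?Gn x v 2"
  proof (rule gdist_twoI[OF xw' _ x_Gn])
    show "{w', v} \<in> snd ?Gn" using vw' by (simp add: insert_commute)
    show "x \<noteq> v" using x lv by auto
    show "{x, v} \<notin> snd ?Gn" using levelled_graph_edge[OF Gn, of x v] x lv by auto
  qed
  then have "x \<in> alpha \<xi> \<delta> \<mu> (Suc m) 2 v" using x_lev by (simp add: alpha_def)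
  ultimately show False using distant by blast
qed

end

theorem lemma6p1:
  fixes \<xi> :: "lbl \<Rightarrow> nat" and \<delta> :: "lbl \<Rightarrow> lbl \<Rightarrow> bool" and \<mu> :: "lbl set \<Rightarrow> bool"
    and n :: nat and v w w' v' :: lbl
  assumes "3 \<le> n"
    and "v \<in> Ilev \<xi> \<delta> \<mu> n" and "w \<in> Ilev \<xi> \<delta> \<mu> (n - 1)"
    and "gdist (Gproc \<xi> \<delta> \<mu> n) v w 3"
    and "alpha \<xi> \<delta> \<mu> (n - 1) 1 w \<inter> alpha \<xi> \<delta> \<mu> n 2 v = {}"
    and "distinct [v, w', v', w]"
    and "{v, w', v', w} \<subseteq> fst (Gproc \<xi> \<delta> \<mu> n)"
    and "{v, w'} \<in> snd (Gproc \<xi> \<delta> \<mu> n)"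
    and "{w', v'} \<in> snd (Gproc \<xi> \<delta> \<mu> n)"
    and "{v', w} \<in> snd (Gproc \<xi> \<delta> \<mu> n)"
  shows "v' \<in> Ilev \<xi> \<delta> \<mu> n \<and> 3 \<le> card (sigma \<xi> \<delta> \<mu> n v')"
proof -
  obtain m where n: "n = Suc m" using assms(1) by (cases n) auto
  let ?G = "Gproc \<xi> \<delta> \<mu> m"
  note edges = assms(8-10)[unfolded n]
  have lv: "length v = Suc m" and lw: "length w = m"
    using assms(2,3) n by (simp_all add: Ilev_def Iof_def Ulev_def)
  have lw': "length w' = m" using neighbour_length_of_top_level[OF edges(1) lv] .
  have no_parent: "Suc (length x) \<noteq> m"
    if "{x, w} \<in> snd (Gproc \<xi> \<delta> \<mu> (Suc m))" "{x, w'} \<in> snd (Gproc \<xi> \<delta> \<mu> (Suc m))" for x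
    using distant_relative_no_common_parent[OF _ lw edges(1) _ that] assms(2,5) n by simp
  have "Suc (length v') \<noteq> m" using no_parent edges(2,3) by (simp add: insert_commute)
  then have v': "v' \<in> Ilev \<xi> \<delta> \<mu> (Suc m)" using neighbour_mem_Ilev_Suc[OF edges(2) lw'] by blast
  then have lv': "length v' = Suc m" by (simp add: Ilev_def Iof_def Ulev_def)
  obtain i where "simrel \<xi> \<delta> \<mu> (Suc m) ?G (w' @ [i]) v'"
    using simrel_child_of_top_level_edge[OF edges(2) lw' lv'] .
  moreover obtain j where "simrel \<xi> \<delta> \<mu> (Suc m) ?G (w @ [j]) v'"
    using simrel_child_of_top_level_edge[OF _ lw lv'] edges(3) by (metis insert_commute)
  moreover have "w' \<noteq> w" using assms(6) by auto
  moreover from this have "\<not> mrel \<xi> \<delta> \<mu> (Suc m) ?G (w' @ [i]) (w @ [j])"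
    using not_mrel_children_without_common_parent[OF lw' lw] no_parent by blast
  moreover from \<open>w' \<noteq> w\<close> have "\<not> mrel \<xi> \<delta> \<mu> (Suc m) ?G (w @ [j]) (w' @ [i])"
    using not_mrel_children_without_common_parent[OF lw lw'] no_parent by blast
  ultimately have "3 \<le> card {y. simrel \<xi> \<delta> \<mu> (Suc m) ?G y v'}"
    using three_le_card_simrel_class[OF finite_fst_Gproc] by simp
  then show ?thesis using v' n by (simp add: sigma_def)
qed

end
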